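(* Let $R$ be a ring, $n\in\mathbb{N}$, and suppose $a\in R$ can be written $a=e+v$ with $e^2=e$, $v$ a unit of $R$, $v^n=1$ and $ev=ve$. Then $(a^n-1)((a-1)^n-1)=0$.
   Context: All rings are associative with identity. *)

theory Defs
  imports Main
begin

end

theory Submission
  imports Defs
begin

(* The idempotent e commutes with v and so splits R into the corners e R and
   (1 - e) R. On the first corner a = e + v acts as 1 + v and a - 1 as v, on the second
   a acts as v and a - 1 as v - 1. Since v ^ n = 1, the factor a ^ n - 1 lives in the
   first corner and (a - 1) ^ n - 1 in the second, so their product vanishes. *)

lemma power_add_idempotent:
  fixes e x :: "'a :: ring_1"
  assumes idem: "e * e = e" and comm: "e * x = x * e"
  shows "(e + x) ^ n = (1 - e) * x ^ n + e * (1 + x) ^ n"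
proof (induction n)
  case 0
  show ?case by (simp add: algebra_simps)
next
  case (Suc n)
  have "(e + x) ^ Suc n = (e + x) * ((1 - e) * x ^ n + e * (1 + x) ^ n)"
    using Suc by simp
  also have "\<dots> = (1 - e) * (x * x ^ n) + e * ((1 + x) * (1 + x) ^ n)"
    using idem comm by (simp add: algebra_simps flip: mult.assoc)
  finally show ?case by simp
qed

lemma idempotent_commuting_mult_complement:
  fixes e p :: "'a :: ring_1"
  assumes idem: "e * e = e" and comm: "e * p = p * e"
  shows "e * p * (1 - e) = 0"
proof -
  have "e * p * (1 - e) = p * (e - e * e)"
    using comm by (simp add: algebra_simps flip: mult.assoc)
  then show ?thesis using idem by simp
qed

theorem lemma2p1:
  fixes a e v :: "'a :: ring_1" and n :: nat
  assumes "a = e + v"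
    and "e * e = e"
    and "\<exists>w. v * w = 1 \<and> w * v = 1"
    and "v ^ n = 1"
    and "e * v = v * e"
  shows "(a ^ n - 1) * ((a - 1) ^ n - 1) = 0"
proof -
  note idem = assms(2) and comm = assms(5)
  let ?p = "(1 + v) ^ n - 1"
  have "a ^ n - 1 = e * ?p"
    using power_add_idempotent[OF idem comm, of n] assms(1,4) by (simp add: algebra_simps)
  moreover have "(a - 1) ^ n - 1 = (1 - e) * ((v - 1) ^ n - 1)"
  proof -
    have "e * (v - 1) = (v - 1) * e" using comm by (simp add: algebra_simps)
    from power_add_idempotent[OF idem this, of n]
    have "(e + (v - 1)) ^ n = (1 - e) * (v - 1) ^ n + e" using assms(4) by simp
    then show ?thesis using assms(1) by (simp add: algebra_simps)
  qed
  moreover have "e * ?p = ?p * e"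
    using power_commuting_commutes[of "1 + v" e n] comm by (simp add: algebra_simps)
  then have "e * ?p * (1 - e) = 0"
    by (rule idempotent_commuting_mult_complement[OF idem])
  ultimately show ?thesis by (metis mult.assoc mult_zero_left)
qed

end
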